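(* Let $(M,S)$ be a spanned map, with $M=(H,\sigma,\alpha)$ and face-permutation $\phi=\sigma\alpha$, and let $\theta$ be its motion function. Then $\theta_{|S}=\sigma_{|S}\alpha_{|S}$ and $\theta_{|\bar S}=\phi_{|\bar S}\alpha_{|\bar S}$, where $\bar S=H\setminus S$. That is, $\theta_{|S}$ is the face-permutation of the pseudo map $M_{|S}$ and $\theta_{|\bar S}$ is the face-permutation of the dual pseudo map $M^*_{|\bar S}$. In particular, a spanned map is a covered map if and only if its motion function is a cyclic permutation.
   Context: Permutations compose right to left. A map is $M=(H,\sigma,\alpha)$ with $H$ finite, $\alpha$ a fixed-point-free involution, $\sigma$ a permutation, $\langle\sigma,\alpha\rangle$ transitive on $H$, and a root in $H$; a pseudo map is the same without transitivity. Its face-permutation is $\sigma\alpha$; faces are its cycles; unicellular means one face. For a permutation $\pi$ and $S\subseteq H$, $\pi_{|S}$ is the permutation of $S$ obtained by deleting from the cycles of $\pi$ the elements not in $S$. A spanned map is $(M,S)$ with $S\subseteq H$ stable by $\alpha$; $M_{|S}=(S,\sigma_{|S},\alpha_{|S})$. The dual map is $M^*=(H,\phi,\alpha)$, so $M^*_{|\bar S}=(\bar S,\phi_{|\bar S},\alpha_{|\bar S})$. $(M,S)$ is a covered map if $M_{|S}$ is a connecting unicellular map: $\sigma_{|S},\alpha_{|S}$ act transitively on $S$, $S$ contains a half-edge of every cycle of $\sigma$ (except that $S=\emptyset$ is allowed when $\sigma$ has a single cycle), and $\sigma_{|S}\alpha_{|S}$ is cyclic. The motion function is $\theta(h)=\sigma\alpha(h)$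 if $h\in S$ and $\theta(h)=\sigma(h)$ if $h\notin S$. *)

theory Defs
  imports "HOL-Combinatorics.Permutations"
begin

text \<open>Permutations are functions that permute the finite set H (identity outside H).
  Composition is right to left: the face permutation is \<sigma> \<circ> \<alpha>.\<close>

definition fpf_involution :: "'a set \<Rightarrow> ('a \<Rightarrow> 'a) \<Rightarrow> bool" where
  "fpf_involution H \<alpha> \<longleftrightarrow> \<alpha> permutes H \<and> (\<forall>h\<in>H. \<alpha> (\<alpha> h) = h \<and> \<alpha> h \<noteq> h)"

definition pseudo_map :: "'a set \<Rightarrow> ('a \<Rightarrow> 'a) \<Rightarrow> ('a \<Rightarrow> 'a) \<Rightarrow> 'a \<Rightarrow> bool" where
  "pseudo_map H \<sigma> \<alpha> r \<longleftrightarrow> finite H \<and> fpf_involution H \<alpha> \<and> \<sigma> permutes H \<and> r \<in> H"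

definition transitive_on :: "'a set \<Rightarrow> ('a \<Rightarrow> 'a) \<Rightarrow> ('a \<Rightarrow> 'a) \<Rightarrow> bool" where
  "transitive_on H \<sigma> \<alpha> \<longleftrightarrow>
     (\<forall>x\<in>H. \<forall>y\<in>H. (x, y) \<in> ({(z, \<sigma> z) | z. z \<in> H} \<union> {(z, \<alpha> z) | z. z \<in> H})\<^sup>*)"

definition is_map :: "'a set \<Rightarrow> ('a \<Rightarrow> 'a) \<Rightarrow> ('a \<Rightarrow> 'a) \<Rightarrow> 'a \<Rightarrow> bool" where
  "is_map H \<sigma> \<alpha> r \<longleftrightarrow> pseudo_map H \<sigma> \<alpha> r \<and> transitive_on H \<sigma> \<alpha>"

definition face_perm :: "('a \<Rightarrow> 'a) \<Rightarrow> ('a \<Rightarrow> 'a) \<Rightarrow> 'a \<Rightarrow> 'a" where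
  "face_perm \<sigma> \<alpha> = \<sigma> \<circ> \<alpha>"

text \<open>The induced permutation \<pi>_{|S}: delete from the cycles of \<pi> the elements not in S,
  i.e. map x \<in> S to the first return of its \<pi>-orbit into S; identity outside S.\<close>
definition restrict_perm :: "('a \<Rightarrow> 'a) \<Rightarrow> 'a set \<Rightarrow> 'a \<Rightarrow> 'a" where
  "restrict_perm \<pi> S x =
     (if x \<in> S then (\<pi> ^^ (LEAST k. 0 < k \<and> (\<pi> ^^ k) x \<in> S)) x else x)"

definition cyclic_on :: "('a \<Rightarrow> 'a) \<Rightarrow> 'a set \<Rightarrow> bool" where
  "cyclic_on \<pi> S \<longleftrightarrow> (\<forall>x\<in>S. \<forall>y\<in>S. \<exists>n. (\<pi> ^^ n) x = y)"

definition spanned_map :: "'a set \<Rightarrow> ('a \<Rightarrow> 'a) \<Rightarrow> ('a \<Rightarrow> 'a) \<Rightarrow> 'a \<Rightarrow> 'a set \<Rightarrow> bool" where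
  "spanned_map H \<sigma> \<alpha> r S \<longleftrightarrow> is_map H \<sigma> \<alpha> r \<and> S \<subseteq> H \<and> \<alpha> ` S \<subseteq> S"

definition motion :: "('a \<Rightarrow> 'a) \<Rightarrow> ('a \<Rightarrow> 'a) \<Rightarrow> 'a set \<Rightarrow> 'a \<Rightarrow> 'a" where
  "motion \<sigma> \<alpha> S h = (if h \<in> S then \<sigma> (\<alpha> h) else \<sigma> h)"

text \<open>M_{|S} is a connecting unicellular map.\<close>
definition covered_map :: "'a set \<Rightarrow> ('a \<Rightarrow> 'a) \<Rightarrow> ('a \<Rightarrow> 'a) \<Rightarrow> 'a \<Rightarrow> 'a set \<Rightarrow> bool" where
  "covered_map H \<sigma> \<alpha> r S \<longleftrightarrow>
     spanned_map H \<sigma> \<alpha> r S \<and>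
     transitive_on S (restrict_perm \<sigma> S) (restrict_perm \<alpha> S) \<and>
     ((\<forall>x\<in>H. \<exists>k. (\<sigma> ^^ k) x \<in> S) \<or> (S = {} \<and> cyclic_on \<sigma> H)) \<and>
     cyclic_on (face_perm (restrict_perm \<sigma> S) (restrict_perm \<alpha> S)) S"

end

theory Submission imports Defs begin

text \<open>On S the motion function is \<sigma>\<alpha>; off S it is \<sigma> = (\<sigma>\<alpha>)\<alpha>, as \<alpha> is an involution
  stabilising S. In both cases \<theta> equals f \<circ> a on a set T stable under a, and f off T. The
  \<theta>-orbit of x \<in> T then shadows the f-orbit of a x until that orbit re-enters T, so
  \<theta>_{|T} = f_{|T} a_{|T}. For the last claim: \<theta> and \<sigma> agree off S, so their orbits meet S
  from the same half-edges; a permutation all of whose orbits meet S is cyclic exactly when its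
  restriction to S is, and a cyclic face permutation \<sigma>_{|S}\<alpha>_{|S} already makes
  \<langle>\<sigma>_{|S}, \<alpha>_{|S}\<rangle> transitive on S.\<close>

lemma funpow_eq_if_avoids:
  assumes "\<And>z. z \<notin> T \<Longrightarrow> g z = f z" and "\<forall>i<n. (f ^^ i) x \<notin> T"
  shows "(g ^^ n) x = (f ^^ n) x"
  using assms(2) by (induction n) (auto simp: assms(1))

lemma reaches_iff_if_agree_off:
  assumes "\<And>z. z \<notin> T \<Longrightarrow> g z = f z"
  shows "(\<exists>k. (g ^^ k) x \<in> T) \<longleftrightarrow> (\<exists>k. (f ^^ k) x \<in> T)"
proof -
  have reach: "\<exists>k. (q ^^ k) x \<in> T"
    if agree: "\<And>z. z \<notin> T \<Longrightarrow> q z = p z" and "\<exists>k. (p ^^ k) x \<in> T" for p q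
  proof -
    define k where "k = (LEAST k. (p ^^ k) x \<in> T)"
    have "(p ^^ k) x \<in> T" unfolding k_def using that(2) by (rule LeastI_ex)
    moreover have "\<forall>i<k. (p ^^ i) x \<notin> T" unfolding k_def using not_less_Least by blast
    then have "(q ^^ k) x = (p ^^ k) x" using funpow_eq_if_avoids[of T q p k x] agree by blast
    ultimately show ?thesis by (intro exI[where x=k]) simp
  qed
  have "\<And>z. z \<notin> T \<Longrightarrow> f z = g z" using assms by simp
  then show ?thesis using reach[of g f, OF assms] reach[of f g] by blast
qed

lemma restrict_perm_outside [simp]: "x \<notin> T \<Longrightarrow> restrict_perm f T x = x"
  by (simp add: restrict_perm_def)

lemma restrict_perm_eq_apply:
  assumes "x \<in> T" and "f x \<in> T"
  shows "restrict_perm f T x = f x"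
proof -
  have "(LEAST k. 0 < k \<and> (f ^^ k) x \<in> T) = 1"
    by (rule Least_equality) (use assms in auto)
  then show ?thesis using assms by (simp add: restrict_perm_def)
qed

lemma restrict_perm_in:
  assumes "permutation f" and "x \<in> T"
  shows "restrict_perm f T x \<in> T"
proof -
  obtain n where "0 < n" "(f ^^ n) x = x" using permutation_self[OF assms(1)] .
  then have return: "\<exists>k. 0 < k \<and> (f ^^ k) x \<in> T" using assms(2) by auto
  show ?thesis using LeastI_ex[OF return] assms(2) unfolding restrict_perm_def by simp
qed

lemma restrict_perm_eq_if_first_step:
  assumes "x \<in> T" and "y \<in> T" and "g x = f y" and agree: "\<And>z. z \<notin> T \<Longrightarrow> g z = f z"
    and "permutation f"
  shows "restrict_perm g T x = restrict_perm f T y"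
proof -
  obtain n where "0 < n" "(f ^^ n) y = y" using permutation_self[OF assms(5)] .
  then have ex: "\<exists>k. 0 < k \<and> (f ^^ k) y \<in> T" using assms(2) by auto
  define m where "m = (LEAST k. 0 < k \<and> (f ^^ k) y \<in> T)"
  have m: "0 < m" "(f ^^ m) y \<in> T" unfolding m_def using LeastI_ex[OF ex] by auto
  have before_m: "(f ^^ i) y \<notin> T" if "0 < i" "i < m" for i
    using not_less_Least[of i] that unfolding m_def by blast
  have shadow: "(g ^^ j) x = (f ^^ j) y" if "0 < j" "j \<le> m" for j
  proof -
    obtain i where j: "j = Suc i" using \<open>0 < j\<close> gr0_implies_Suc by blast
    have "\<forall>i'<i. (f ^^ i') (f y) \<notin> T"
    proof (intro allI impI)
      fix i' assume "i' < i"
      then have "0 < Suc i'" "Suc i' < m" using j that(2) by simp_all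
      then have "(f ^^ Suc i') y \<notin> T" by (rule before_m)
      then show "(f ^^ i') (f y) \<notin> T" by (metis funpow_Suc_right o_apply)
    qed
    then have "(g ^^ i) (f y) = (f ^^ i) (f y)" using funpow_eq_if_avoids[of T g f] agree by blast
    then show ?thesis using j assms(3) by (metis funpow_Suc_right o_apply)
  qed
  have "(LEAST k. 0 < k \<and> (g ^^ k) x \<in> T) = m"
  proof (rule Least_equality)
    show "0 < m \<and> (g ^^ m) x \<in> T" using m shadow by simp
  next
    fix k assume "0 < k \<and> (g ^^ k) x \<in> T"
    then show "m \<le> k" using shadow before_m by (metis less_imp_le_nat not_le_imp_less)
  qed
  then show ?thesis using assms(1,2) shadow m unfolding restrict_perm_def m_def by simp
qed

lemma restrict_perm_eq_face_perm_if_agree: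
  assumes "permutation f" and "a ` T \<subseteq> T"
    and inside: "\<And>x. x \<in> T \<Longrightarrow> g x = f (a x)" and outside: "\<And>z. z \<notin> T \<Longrightarrow> g z = f z"
  shows "restrict_perm g T = face_perm (restrict_perm f T) (restrict_perm a T)"
proof
  fix x
  show "restrict_perm g T x = face_perm (restrict_perm f T) (restrict_perm a T) x"
  proof (cases "x \<in> T")
    case True
    then have "a x \<in> T" using assms(2) by blast
    then have "restrict_perm g T x = restrict_perm f T (a x)"
      using restrict_perm_eq_if_first_step True inside outside assms(1) by metis
    then show ?thesis using True \<open>a x \<in> T\<close> by (simp add: face_perm_def restrict_perm_eq_apply)
  qed (simp add: face_perm_def)
qed

lemma restrict_perm_funpow: "\<exists>n. (restrict_perm g T ^^ m) x = (g ^^ n) x"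
proof (induction m arbitrary: x)
  case 0 then show ?case by (metis funpow_0)
next
  case (Suc m)
  obtain n where "(restrict_perm g T ^^ m) (restrict_perm g T x) = (g ^^ n) (restrict_perm g T x)"
    using Suc by blast
  moreover obtain l where "restrict_perm g T x = (g ^^ l) x"
    unfolding restrict_perm_def by (metis funpow_0)
  ultimately show ?case by (metis funpow_Suc_right funpow_add o_apply)
qed

lemma cyclic_on_restrict_perm:
  assumes "cyclic_on g H" and "T \<subseteq> H"
  shows "cyclic_on (restrict_perm g T) T"
  unfolding cyclic_on_def
proof (intro ballI)
  fix x y assume "x \<in> T" "y \<in> T"
  then obtain n where "(g ^^ n) x = y" using assms unfolding cyclic_on_def by blast
  then show "\<exists>m. (restrict_perm g T ^^ m) x = y" using \<open>x \<in> T\<close>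
  proof (induction n arbitrary: x rule: less_induct)
    case (less n x)
    show ?case
    proof (cases "n = 0")
      case True then show ?thesis using less by (metis funpow_0)
    next
      case False
      define l where "l = (LEAST k. 0 < k \<and> (g ^^ k) x \<in> T)"
      have hit: "0 < n \<and> (g ^^ n) x \<in> T" using False less \<open>y \<in> T\<close> by simp
      have l: "0 < l" "(g ^^ l) x \<in> T" "l \<le> n"
        unfolding l_def using LeastI[where P="\<lambda>k. 0 < k \<and> (g ^^ k) x \<in> T", OF hit]
          Least_le[where P="\<lambda>k. 0 < k \<and> (g ^^ k) x \<in> T", OF hit] by auto
      have "restrict_perm g T x = (g ^^ l) x" using less(3) unfolding restrict_perm_def l_def by simp
      moreover have "(g ^^ (n - l)) ((g ^^ l) x) = y"
        using less(2) l(3) by (metis funpow_add le_add_diff_inverse2 o_apply)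
      ultimately obtain m where "(restrict_perm g T ^^ m) (restrict_perm g T x) = y"
        using less(1)[of "n - l"] l by auto
      then show ?thesis by (metis funpow_Suc_right o_apply)
    qed
  qed
qed

lemma permutation_funpow_return:
  assumes "permutation g"
  obtains n where "(g ^^ n) ((g ^^ k) y) = y"
proof -
  obtain p where "0 < p" "(g ^^ p) y = y" using permutation_self[OF assms] .
  then have "(g ^^ (p * k - k + k)) y = y"
    using funpow_mod_eq[where f=g and n=p and x=y and m="p * k"] by (cases "k = 0") auto
  then show ?thesis using that by (simp add: funpow_add)
qed

lemma cyclic_on_if_restrict_perm_cyclic:
  assumes "permutation g" and cyc: "cyclic_on (restrict_perm g T) T"
    and reach: "\<And>x. x \<in> H \<Longrightarrow> \<exists>k. (g ^^ k) x \<in> T"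
  shows "cyclic_on g H"
  unfolding cyclic_on_def
proof (intro ballI)
  fix x y assume "x \<in> H" "y \<in> H"
  obtain k1 k2 where "(g ^^ k1) x \<in> T" "(g ^^ k2) y \<in> T"
    using reach \<open>x \<in> H\<close> \<open>y \<in> H\<close> by blast
  then obtain m where "(restrict_perm g T ^^ m) ((g ^^ k1) x) = (g ^^ k2) y"
    using cyc unfolding cyclic_on_def by blast
  then obtain n where "(g ^^ n) ((g ^^ k1) x) = (g ^^ k2) y" using restrict_perm_funpow by metis
  moreover obtain l where "(g ^^ l) ((g ^^ k2) y) = y" by (rule permutation_funpow_return[OF assms(1)])
  ultimately have "(g ^^ (l + n + k1)) x = y" by (simp add: funpow_add)
  then show "\<exists>n. (g ^^ n) x = y" ..
qed

lemma transitive_on_if_cyclic_face_perm: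
  assumes cyc: "cyclic_on (face_perm f g) T" and "f ` T \<subseteq> T" and "g ` T \<subseteq> T"
  shows "transitive_on T f g"
  unfolding transitive_on_def
proof (intro ballI)
  fix x y assume "x \<in> T" "y \<in> T"
  let ?R = "{(z, f z) | z. z \<in> T} \<union> {(z, g z) | z. z \<in> T}"
  have "(x, (face_perm f g ^^ m) x) \<in> ?R\<^sup>* \<and> (face_perm f g ^^ m) x \<in> T" for m
  proof (induction m)
    case 0 then show ?case using \<open>x \<in> T\<close> by simp
  next
    case (Suc m)
    define z where "z = (face_perm f g ^^ m) x"
    have "(x, z) \<in> ?R\<^sup>*" "z \<in> T" using Suc z_def by auto
    moreover have "g z \<in> T" "f (g z) \<in> T" using \<open>z \<in> T\<close> assms(2,3) by blast+
    ultimately have "(x, f (g z)) \<in> ?R\<^sup>*"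
      by (blast intro: rtrancl_into_rtrancl)
    moreover have "(face_perm f g ^^ Suc m) x = f (g z)" by (simp add: z_def face_perm_def)
    ultimately show ?case using \<open>f (g z) \<in> T\<close> by simp
  qed
  moreover obtain m where "(face_perm f g ^^ m) x = y"
    using cyc \<open>x \<in> T\<close> \<open>y \<in> T\<close> unfolding cyclic_on_def by blast
  ultimately show "(x, y) \<in> ?R\<^sup>*" by blast
qed

lemma spanned_mapD:
  assumes "spanned_map H \<sigma> \<alpha> r S"
  shows "finite H" "\<sigma> permutes H" "\<alpha> permutes H" "\<And>h. h \<in> H \<Longrightarrow> \<alpha> (\<alpha> h) = h"
    "S \<subseteq> H" "\<alpha> ` S \<subseteq> S"
  using assms
  by (auto simp: spanned_map_def is_map_def pseudo_map_def fpf_involution_def)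

lemma motion_permutes:
  assumes "spanned_map H \<sigma> \<alpha> r S"
  shows "motion \<sigma> \<alpha> S permutes H"
proof -
  note span = spanned_mapD[OF assms]
  define \<beta> where "\<beta> h = (if h \<in> S then \<alpha> h else h)" for h
  have "\<beta> (\<beta> h) = h" for h using span(4-6) by (auto simp: \<beta>_def)
  then have "bij \<beta>" by (rule involuntory_imp_bij)
  moreover have "\<beta> h = h" if "h \<notin> H" for h using that span(5) by (auto simp: \<beta>_def)
  ultimately have "\<beta> permutes H" by (simp add: permutes_def bij_iff)
  then have "\<sigma> \<circ> \<beta> permutes H" using span(2) by (rule permutes_compose)
  moreover have "motion \<sigma> \<alpha> S = \<sigma> \<circ> \<beta>" by (auto simp: motion_def \<beta>_def)
  ultimately show ?thesis by simp
qed

lemma restrict_motion_inside: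
  assumes "spanned_map H \<sigma> \<alpha> r S"
  shows "restrict_perm (motion \<sigma> \<alpha> S) S = face_perm (restrict_perm \<sigma> S) (restrict_perm \<alpha> S)"
proof (rule restrict_perm_eq_face_perm_if_agree)
  show "permutation \<sigma>" using spanned_mapD(1,2)[OF assms] permutation_permutes by blast
qed (use spanned_mapD(6)[OF assms] in \<open>auto simp: motion_def\<close>)

lemma restrict_motion_outside:
  assumes "spanned_map H \<sigma> \<alpha> r S"
  shows "restrict_perm (motion \<sigma> \<alpha> S) (H - S)
           = face_perm (restrict_perm (face_perm \<sigma> \<alpha>) (H - S)) (restrict_perm \<alpha> (H - S))"
proof (rule restrict_perm_eq_face_perm_if_agree)
  note span = spanned_mapD[OF assms]
  show "permutation (face_perm \<sigma> \<alpha>)"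
    using span(1-3) permutes_compose permutation_permutes unfolding face_perm_def by blast
  show "\<alpha> ` (H - S) \<subseteq> H - S"
  proof
    fix y assume "y \<in> \<alpha> ` (H - S)"
    then obtain x where "x \<in> H" "x \<notin> S" "y = \<alpha> x" by blast
    moreover have "\<alpha> x \<in> S \<Longrightarrow> \<alpha> (\<alpha> x) \<in> S" using span(6) by blast
    ultimately show "y \<in> H - S" using span(4) permutes_in_image[OF span(3)] by auto
  qed
  show "motion \<sigma> \<alpha> S x = face_perm \<sigma> \<alpha> (\<alpha> x)" if "x \<in> H - S" for x
    using that span(4) by (simp add: motion_def face_perm_def)
  show "motion \<sigma> \<alpha> S z = face_perm \<sigma> \<alpha> z" if "z \<notin> H - S" for z
    using that permutes_not_in[OF span(3)] by (auto simp: motion_def face_perm_def)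
qed

lemma motion_reaches_iff: "(\<exists>k. (motion \<sigma> \<alpha> S ^^ k) x \<in> S) \<longleftrightarrow> (\<exists>k. (\<sigma> ^^ k) x \<in> S)"
  by (rule reaches_iff_if_agree_off) (simp add: motion_def)

lemma motion_empty [simp]: "motion \<sigma> \<alpha> {} = \<sigma>"
  by (auto simp: motion_def)

lemma cyclic_motion_if_covered_map:
  assumes cov: "covered_map H \<sigma> \<alpha> r S"
  shows "cyclic_on (motion \<sigma> \<alpha> S) H"
proof (cases "S = {} \<and> cyclic_on \<sigma> H")
  case False
  have span: "spanned_map H \<sigma> \<alpha> r S" using cov unfolding covered_map_def by blast
  have "permutation (motion \<sigma> \<alpha> S)"
    using spanned_mapD(1)[OF span] motion_permutes[OF span] permutation_permutes by blast
  moreover have "cyclic_on (restrict_perm (motion \<sigma> \<alpha> S) S) S"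
    using cov restrict_motion_inside[OF span] unfolding covered_map_def by simp
  moreover have "\<exists>k. (motion \<sigma> \<alpha> S ^^ k) x \<in> S" if "x \<in> H" for x
  proof -
    have "\<exists>k. (\<sigma> ^^ k) x \<in> S" using cov False that unfolding covered_map_def by blast
    then show ?thesis by (simp add: motion_reaches_iff)
  qed
  ultimately show ?thesis by (rule cyclic_on_if_restrict_perm_cyclic)
next
  case True
  then show ?thesis by simp
qed

lemma covered_map_if_cyclic_motion:
  assumes span: "spanned_map H \<sigma> \<alpha> r S" and cyc: "cyclic_on (motion \<sigma> \<alpha> S) H"
  shows "covered_map H \<sigma> \<alpha> r S"
proof -
  note span_facts = spanned_mapD[OF span]
  have perms: "permutation \<sigma>" "permutation \<alpha>"
    using span_facts(1-3) permutation_permutes by blast+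
  have cycF: "cyclic_on (face_perm (restrict_perm \<sigma> S) (restrict_perm \<alpha> S)) S"
    using cyclic_on_restrict_perm[OF cyc span_facts(5)] restrict_motion_inside[OF span] by simp
  have "restrict_perm f S ` S \<subseteq> S" if "permutation f" for f
    using restrict_perm_in[OF that] by blast
  then have "transitive_on S (restrict_perm \<sigma> S) (restrict_perm \<alpha> S)"
    using transitive_on_if_cyclic_face_perm[OF cycF] perms by blast
  moreover have "(\<forall>x\<in>H. \<exists>k. (\<sigma> ^^ k) x \<in> S) \<or> (S = {} \<and> cyclic_on \<sigma> H)"
  proof (cases "S = {}")
    case False
    then obtain s where "s \<in> S" by blast
    then have "s \<in> H" using span_facts(5) by blast
    have "\<exists>k. (\<sigma> ^^ k) x \<in> S" if x: "x \<in> H" for x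
    proof -
      obtain n where "(motion \<sigma> \<alpha> S ^^ n) x = s"
        using cyc[unfolded cyclic_on_def, rule_format, OF x \<open>s \<in> H\<close>] ..
      then have "\<exists>k. (motion \<sigma> \<alpha> S ^^ k) x \<in> S" using \<open>s \<in> S\<close> by (intro exI[where x=n]) simp
      then show ?thesis by (simp add: motion_reaches_iff)
    qed
    then show ?thesis by blast
  qed (use cyc in simp)
  ultimately show ?thesis using span cycF unfolding covered_map_def by blast
qed

theorem mainTheorem5:
  fixes H S :: "'a set" and \<sigma> \<alpha> :: "'a \<Rightarrow> 'a" and r :: 'a
  assumes "spanned_map H \<sigma> \<alpha> r S"
  shows "restrict_perm (motion \<sigma> \<alpha> S) S
           = face_perm (restrict_perm \<sigma> S) (restrict_perm \<alpha> S)
       \<and> restrict_perm (motion \<sigma> \<alpha> S) (H - S)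
           = face_perm (restrict_perm (face_perm \<sigma> \<alpha>) (H - S)) (restrict_perm \<alpha> (H - S))
       \<and> (covered_map H \<sigma> \<alpha> r S \<longleftrightarrow> cyclic_on (motion \<sigma> \<alpha> S) H)"
  using restrict_motion_inside[OF assms] restrict_motion_outside[OF assms]
    cyclic_motion_if_covered_map[of H \<sigma> \<alpha> r S] covered_map_if_cyclic_motion[OF assms]
  by blast

end
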